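(* For every $p\in[1,\infty)$, the profile of the lamplighter group satisfies $\epsilon_{\mathbb Z\wr\mathbb Z;p}(S)\preceq \dfrac{\log S}{S^{1/3}}$.
   Context: The lamplighter group $\mathbb Z\wr\mathbb Z$ consists of pairs $(f,n)$ with $f\colon\mathbb Z\to\mathbb Z$ finitely supported and $n\in\mathbb Z$, with product $(f,n)(g,n')=(f+g(\cdot-n),n+n')$, equipped with the word metric for generators $(\delta_0,0)$ and $(0,1)$. For a metric space $X$, $\ell^p(X)$ and $\ell^p_1(X)$ are the $p$-summable functions and their unit sphere; for $\xi\colon X\to\ell^p(X)$, $S(\xi)=\sup\{d(x,y):\xi_x(y)\ne0\}$, $\varepsilon(\xi;p)=\sup_{x\ne y}\|\xi_x-\xi_y\|_p/d(x,y)$, and $\epsilon_{X;p}(S)=\inf\{\varepsilon(\xi;p):\xi\colon X\to\ell^p_1(X),\ S(\xi)\le S\}$. For non-negative monotone functions, $g\preceq f$ means there are constants $C,D>0$ with $f(t)\ge Cg(Dt)$ for all sufficiently large $t$. *)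

theory Defs
  imports "HOL-Analysis.Analysis"
begin

type_synonym LL = "(int \<Rightarrow> int) \<times> int"

definition LL_carrier :: "LL set" where
  "LL_carrier = {(f, n). finite {x. f x \<noteq> 0}}"

definition LL_mult :: "LL \<Rightarrow> LL \<Rightarrow> LL" where
  "LL_mult a b = (case a of (f, n) \<Rightarrow> (case b of (g, m) \<Rightarrow> (\<lambda>x. f x + g (x - n), n + m)))"

definition delta0 :: "int \<Rightarrow> int" where
  "delta0 = (\<lambda>x. if x = 0 then 1 else 0)"

definition LL_gens :: "LL set" where
  "LL_gens = {(delta0, 0), (\<lambda>x. - delta0 x, 0), (\<lambda>_. 0, 1), (\<lambda>_. 0, -1)}"

text \<open>Word metric: d(x,y) = word length of x^{-1} y, i.e. least number of generators
  needed to reach y from x by right multiplication.\<close>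
definition LL_dist :: "LL \<Rightarrow> LL \<Rightarrow> nat" where
  "LL_dist x y = (LEAST k. \<exists>ws. length ws = k \<and> set ws \<subseteq> LL_gens \<and> foldl LL_mult x ws = y)"

definition lp_norm :: "real \<Rightarrow> 'a set \<Rightarrow> ('a \<Rightarrow> real) \<Rightarrow> real" where
  "lp_norm p X h = (\<Sum>\<^sub>\<infinity>y\<in>X. \<bar>h y\<bar> powr p) powr (1 / p)"

definition lp_space :: "real \<Rightarrow> 'a set \<Rightarrow> ('a \<Rightarrow> real) set" where
  "lp_space p X = {h. (\<lambda>y. \<bar>h y\<bar> powr p) summable_on X}"

definition lp_sphere :: "real \<Rightarrow> 'a set \<Rightarrow> ('a \<Rightarrow> real) set" where
  "lp_sphere p X = {h \<in> lp_space p X. lp_norm p X h = 1}"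

definition eps_xi :: "real \<Rightarrow> 'a set \<Rightarrow> ('a \<Rightarrow> 'a \<Rightarrow> real) \<Rightarrow> ('a \<Rightarrow> 'a \<Rightarrow> real) \<Rightarrow> real" where
  "eps_xi p X d \<xi> = (SUP (x, y) \<in> {(x, y). x \<in> X \<and> y \<in> X \<and> x \<noteq> y}.
       lp_norm p X (\<lambda>z. \<xi> x z - \<xi> y z) / d x y)"

text \<open>S(xi) = sup{d(x,y) : xi_x(y) /= 0}; S(xi) <= S is stated pointwise.\<close>
definition supp_radius_le :: "'a set \<Rightarrow> ('a \<Rightarrow> 'a \<Rightarrow> real) \<Rightarrow> ('a \<Rightarrow> 'a \<Rightarrow> real) \<Rightarrow> real \<Rightarrow> bool" where
  "supp_radius_le X d \<xi> S \<longleftrightarrow> (\<forall>x\<in>X. \<forall>y\<in>X. \<xi> x y \<noteq> 0 \<longrightarrow> d x y \<le> S)"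

definition profile :: "real \<Rightarrow> 'a set \<Rightarrow> ('a \<Rightarrow> 'a \<Rightarrow> real) \<Rightarrow> real \<Rightarrow> real" where
  "profile p X d S = Inf {eps_xi p X d \<xi> | \<xi>.
       (\<forall>x\<in>X. \<xi> x \<in> lp_sphere p X) \<and> supp_radius_le X d \<xi> S}"

definition preceq :: "(real \<Rightarrow> real) \<Rightarrow> (real \<Rightarrow> real) \<Rightarrow> bool" where
  "preceq g f \<longleftrightarrow> (\<exists>C>0. \<exists>D>0. eventually (\<lambda>t. f t \<ge> C * g (D * t)) at_top)"

end

theory Submission
  imports Defs
begin

text \<open>
  For \<open>a \<ge> 1\<close> let \<open>\<phi>\<^sub>a(f, n)\<close> be the product of the tent function \<open>max 0 (2a - \<bar>\<cdot>\<bar>)\<close>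
  of the cursor \<open>n\<close> and of all lamp values \<open>f k\<close> with \<open>\<bar>k - n\<bar> \<le> 2a\<close>, and zero if a lamp
  outside this window is lit. Left multiplication by a generator changes a single tent
  factor by at most 1, and along that direction the factor is at least \<open>a\<close> on \<open>a + 1\<close> of
  the \<open>4a + 1\<close> nearby translates; summing this pointwise comparison over the group gives
  \<open>\<parallel>\<phi>\<^sub>a - s\<phi>\<^sub>a\<parallel>\<^sub>p \<le> (5/a) \<parallel>\<phi>\<^sub>a\<parallel>\<^sub>p\<close>. The normalised translates \<open>\<xi>\<^sub>x = \<phi>\<^sub>a(x\<inverse>\<cdot>) / \<parallel>\<phi>\<^sub>a\<parallel>\<^sub>p\<close>
  are then \<open>5/a\<close>-Lipschitz, and since \<open>\<phi>\<^sub>a\<close> is supported on elements of word length at most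
  \<open>40a\<^sup>2\<close>, taking \<open>a \<approx> \<surd>(S/40)\<close> gives \<open>\<epsilon>(S) \<le> 64/\<surd>S\<close>, which is stronger than the bound
  \<open>ln S / S powr (1/3)\<close> claimed.
\<close>

lemma convex_on_powr_nonneg:
  fixes p :: real
  assumes p: "p \<ge> 1"
  shows "convex_on {0..} (\<lambda>x::real. x powr p)"
proof (rule convex_onI)
  show "convex {0::real..}" by simp
  fix t x y :: real
  assume t: "0 < t" "t < 1" and xy: "x \<in> {0..}" "y \<in> {0..}"
  have powr_le_self: "s powr p \<le> s" if "0 \<le> s" "s \<le> 1" for s :: real
    using powr_mono'[of 1 p s] that p by simp
  consider "x = 0" | "y = 0" | "x > 0" "y > 0"
    using xy by fastforce
  then show "((1 - t) *\<^sub>R x + t *\<^sub>R y) powr p \<le> (1 - t) * x powr p + t * y powr p"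
  proof cases
    case 1
    have "(t * y) powr p = t powr p * y powr p" by (simp add: powr_mult)
    also have "\<dots> \<le> t * y powr p" using powr_le_self[of t] t by (intro mult_right_mono) auto
    finally show ?thesis using 1 by simp
  next
    case 2
    have "((1 - t) * x) powr p = (1 - t) powr p * x powr p" by (simp add: powr_mult)
    also have "\<dots> \<le> (1 - t) * x powr p" using powr_le_self[of "1 - t"] t by (intro mult_right_mono) auto
    finally show ?thesis using 2 by simp
  next
    case 3
    then show ?thesis using convex_onD[OF powr_convex[OF p], of t x y] t by simp
  qed
qed

lemma sum_powr_le_card_powr_mult_sum:
  fixes p :: real and x :: "'i \<Rightarrow> real"
  assumes p: "p \<ge> 1" and I: "finite I" "I \<noteq> {}" and x: "\<And>i. i \<in> I \<Longrightarrow> x i \<ge> 0"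
  shows "(\<Sum>i\<in>I. x i) powr p \<le> real (card I) powr (p - 1) * (\<Sum>i\<in>I. x i powr p)"
proof -
  define k where "k = real (card I)"
  have k: "k > 0" using I by (simp add: k_def card_gt_0_iff)
  have "(\<Sum>i\<in>I. (1 / k) *\<^sub>R x i) powr p \<le> (\<Sum>i\<in>I. (1 / k) * x i powr p)"
    using I x k by (intro convex_on_sum[OF I convex_on_powr_nonneg[OF p]]) (auto simp: k_def)
  then have "(\<Sum>i\<in>I. x i) powr p / k powr p \<le> (\<Sum>i\<in>I. x i powr p) / k"
    by (simp add: powr_divide sum_nonneg x flip: sum_divide_distrib sum_distrib_left)
  then have "(\<Sum>i\<in>I. x i) powr p \<le> k powr p * ((\<Sum>i\<in>I. x i powr p) / k)"
    using k by (simp add: field_simps)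
  also have "\<dots> = k powr (p - 1) * (\<Sum>i\<in>I. x i powr p)"
    using k by (simp add: powr_diff)
  finally show ?thesis unfolding k_def .
qed

lemma abs_diff_powr_le:
  fixes u v p :: real
  assumes p: "p \<ge> 1"
  shows "\<bar>u - v\<bar> powr p \<le> 2 powr (p - 1) * (\<bar>u\<bar> powr p + \<bar>v\<bar> powr p)"
proof -
  have "\<bar>u - v\<bar> powr p \<le> (\<Sum>i\<in>{0::nat, 1}. (if i = 0 then \<bar>u\<bar> else \<bar>v\<bar>)) powr p"
    using p by (intro powr_mono2) auto
  also have "\<dots> \<le> real (card {0::nat, 1}) powr (p - 1) *
                   (\<Sum>i\<in>{0::nat, 1}. (if i = 0 then \<bar>u\<bar> else \<bar>v\<bar>) powr p)"
    by (intro sum_powr_le_card_powr_mult_sum p) auto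
  finally show ?thesis by simp
qed

lemma summable_on_finite_sum:
  fixes F :: "'j \<Rightarrow> 'a \<Rightarrow> real"
  assumes "finite J" "\<And>j. j \<in> J \<Longrightarrow> F j summable_on A"
  shows "(\<lambda>z. \<Sum>j\<in>J. F j z) summable_on A"
  using assms by (induction J rule: finite_induct) (auto intro: summable_on_add)

lemma infsum_finite_sum:
  fixes F :: "'j \<Rightarrow> 'a \<Rightarrow> real"
  assumes "finite J" "\<And>j. j \<in> J \<Longrightarrow> F j summable_on A"
  shows "infsum (\<lambda>z. \<Sum>j\<in>J. F j z) A = (\<Sum>j\<in>J. infsum (F j) A)"
  using assms
  by (induction J rule: finite_induct) (auto simp: infsum_add summable_on_finite_sum)

lemma summable_on_finite_support:
  fixes f :: "'a \<Rightarrow> 'b::{topological_comm_monoid_add, t2_space}"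
  assumes "finite {x. f x \<noteq> 0}"
  shows "f summable_on A"
proof -
  have "f summable_on A \<longleftrightarrow> f summable_on (A \<inter> {x. f x \<noteq> 0})"
    by (rule summable_on_cong_neutral) auto
  then show ?thesis using assms by simp
qed

lemma lp_norm_nonneg [simp]: "0 \<le> lp_norm p X h"
  by (simp add: lp_norm_def)

lemma lp_space_diff:
  assumes p: "p \<ge> 1" and g: "g \<in> lp_space p X" and h: "h \<in> lp_space p X"
  shows "(\<lambda>y. g y - h y) \<in> lp_space p X"
proof -
  have "(\<lambda>y. 2 powr (p - 1) * (\<bar>g y\<bar> powr p + \<bar>h y\<bar> powr p)) summable_on X"
    using g h by (intro summable_on_cmult_right summable_on_add) (auto simp: lp_space_def)
  then show ?thesis
    unfolding lp_space_def mem_Collect_eq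
    by (rule summable_on_comparison_test) (auto intro: abs_diff_powr_le p)
qed

lemma infsum_powr_lp_sphere:
  assumes "g \<in> lp_sphere p X" "p > 0"
  shows "infsum (\<lambda>y. \<bar>g y\<bar> powr p) X = 1"
proof -
  have "infsum (\<lambda>y. \<bar>g y\<bar> powr p) X = (infsum (\<lambda>y. \<bar>g y\<bar> powr p) X powr (1 / p)) powr p"
    using assms(2) by (simp add: powr_powr infsum_nonneg)
  also have "\<dots> = 1"
    using assms(1) by (simp add: lp_sphere_def lp_norm_def)
  finally show ?thesis .
qed

lemma lp_norm_le_of_infsum_le:
  assumes "p > 0" "infsum (\<lambda>y. \<bar>h y\<bar> powr p) X \<le> B"
  shows "lp_norm p X h \<le> B powr (1 / p)"
  unfolding lp_norm_def using assms by (intro powr_mono2) (auto intro: infsum_nonneg)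

lemma lp_norm_diff_lp_sphere_le:
  assumes p: "p \<ge> 1" and g: "g \<in> lp_sphere p X" and h: "h \<in> lp_sphere p X"
  shows "lp_norm p X (\<lambda>y. g y - h y) \<le> 2"
proof -
  have gh: "g \<in> lp_space p X" "h \<in> lp_space p X" using g h by (auto simp: lp_sphere_def)
  have "infsum (\<lambda>y. \<bar>g y - h y\<bar> powr p) X
          \<le> infsum (\<lambda>y. 2 powr (p - 1) * (\<bar>g y\<bar> powr p + \<bar>h y\<bar> powr p)) X"
    using lp_space_diff[OF p gh] gh
    by (intro infsum_mono abs_diff_powr_le p summable_on_cmult_right summable_on_add)
      (auto simp: lp_space_def)
  also have "\<dots> = 2 powr (p - 1) * 2"
    using gh g h p
    by (simp add: infsum_cmult_right' infsum_add infsum_powr_lp_sphere lp_space_def)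
  also have "\<dots> = 2 powr p"
    by (simp add: powr_diff)
  finally have "lp_norm p X (\<lambda>y. g y - h y) \<le> (2 powr p) powr (1 / p)"
    using p by (intro lp_norm_le_of_infsum_le) auto
  then show ?thesis using p by (simp add: powr_powr)
qed

text \<open>The supremum in \<open>eps_xi\<close> is only meaningful for bounded difference quotients; for an
  \<open>\<nat>\<close>-valued metric they are at most 2.\<close>
lemma eps_xi_nonneg:
  fixes D :: "'a \<Rightarrow> 'a \<Rightarrow> nat"
  assumes p: "p \<ge> 1" and \<xi>: "\<forall>x\<in>X. \<xi> x \<in> lp_sphere p X"
    and x0: "x0 \<in> X" and y0: "y0 \<in> X" "x0 \<noteq> y0"
  shows "0 \<le> eps_xi p X (\<lambda>x y. real (D x y)) \<xi>"
  unfolding eps_xi_def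
proof (rule cSUP_upper2)
  let ?q = "\<lambda>(x, y). lp_norm p X (\<lambda>z. \<xi> x z - \<xi> y z) / real (D x y)"
  show "bdd_above (?q ` {(x, y). x \<in> X \<and> y \<in> X \<and> x \<noteq> y})"
  proof (rule bdd_aboveI2)
    fix xy assume "xy \<in> {(x, y). x \<in> X \<and> y \<in> X \<and> x \<noteq> y}"
    then obtain x y where xy: "xy = (x, y)" and "x \<in> X" "y \<in> X" by auto
    then have N: "lp_norm p X (\<lambda>z. \<xi> x z - \<xi> y z) \<le> 2"
      using lp_norm_diff_lp_sphere_le[OF p] \<xi> by blast
    have "lp_norm p X (\<lambda>z. \<xi> x z - \<xi> y z) / real (D x y) \<le> lp_norm p X (\<lambda>z. \<xi> x z - \<xi> y z)"
      by (cases "D x y = 0") (auto simp: lp_norm_def divide_le_eq mult_le_cancel_left1)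
    then show "?q xy \<le> 2" using N by (simp add: xy)
  qed
  show "(x0, y0) \<in> {(x, y). x \<in> X \<and> y \<in> X \<and> x \<noteq> y}" using x0 y0 by simp
qed simp

lemma infsum_powr_telescope_le:
  fixes P :: "nat \<Rightarrow> 'b \<Rightarrow> real"
  assumes p: "p \<ge> 1" and lp: "\<And>i. i \<le> d \<Longrightarrow> P i \<in> lp_space p Y"
    and step: "\<And>i. i < d \<Longrightarrow> infsum (\<lambda>y. \<bar>P i y - P (Suc i) y\<bar> powr p) Y \<le> E"
  shows "infsum (\<lambda>y. \<bar>P 0 y - P d y\<bar> powr p) Y \<le> real d powr p * E"
proof (cases "d = 0")
  case False
  define D where "D i y = \<bar>P i y - P (Suc i) y\<bar> powr p" for i y
  have D_summable: "D i summable_on Y" if "i < d" for i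
    using lp_space_diff[OF p lp lp, of i "Suc i"] that unfolding D_def lp_space_def by simp
  have pointwise: "\<bar>P 0 y - P d y\<bar> powr p \<le> real d powr (p - 1) * (\<Sum>i<d. D i y)" for y
  proof -
    have "P 0 y - P d y = (\<Sum>i<d. P i y - P (Suc i) y)"
      by (rule sum_lessThan_telescope'[symmetric])
    then have "\<bar>P 0 y - P d y\<bar> powr p \<le> (\<Sum>i<d. \<bar>P i y - P (Suc i) y\<bar>) powr p"
      using p by (intro powr_mono2) (simp_all add: sum_abs)
    also have "\<dots> \<le> real (card {..<d}) powr (p - 1) * (\<Sum>i<d. D i y)"
      unfolding D_def using False by (intro sum_powr_le_card_powr_mult_sum p) auto
    finally show ?thesis by simp
  qed
  have "infsum (\<lambda>y. \<bar>P 0 y - P d y\<bar> powr p) Y \<le> infsum (\<lambda>y. real d powr (p - 1) * (\<Sum>i<d. D i y)) Y"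
    using lp_space_diff[OF p lp lp, of 0 d] D_summable
    by (intro infsum_mono pointwise summable_on_cmult_right summable_on_finite_sum)
      (auto simp: lp_space_def)
  also have "\<dots> = real d powr (p - 1) * (\<Sum>i<d. infsum (D i) Y)"
    using infsum_finite_sum[of "{..<d}" D Y] D_summable by (simp add: infsum_cmult_right')
  also have "\<dots> \<le> real d powr (p - 1) * (real d * E)"
    using step sum_mono[of "{..<d}" "\<lambda>i. infsum (D i) Y" "\<lambda>_. E"]
    by (intro mult_left_mono) (auto simp: D_def[abs_def])
  also have "\<dots> = real d powr p * E"
    using False by (simp add: powr_diff)
  finally show ?thesis .
qed simp

section \<open>The lamplighter group and its word length\<close>

definition LL_one :: LL where
  "LL_one = (\<lambda>_. 0, 0)"

definition LL_inv :: "LL \<Rightarrow> LL" where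
  "LL_inv x = (\<lambda>k. - fst x (k + snd x), - snd x)"

lemma LL_mult_Pair: "LL_mult (f, n) (g, m) = (\<lambda>x. f x + g (x - n), n + m)"
  by (simp add: LL_mult_def)

lemma LL_mult_assoc: "LL_mult (LL_mult x y) z = LL_mult x (LL_mult y z)"
  by (cases x; cases y; cases z) (simp add: LL_mult_def fun_eq_iff algebra_simps)

lemma LL_mult_one_right [simp]: "LL_mult z LL_one = z"
  by (cases z) (simp add: LL_mult_def LL_one_def)

lemma LL_mult_inv_cancel_left [simp]: "LL_mult (LL_inv x) (LL_mult x z) = z"
  by (cases x; cases z) (simp add: LL_mult_def LL_inv_def fun_eq_iff)

lemma LL_mult_inv_cancel_left' [simp]: "LL_mult x (LL_mult (LL_inv x) z) = z"
  by (cases x; cases z) (simp add: LL_mult_def LL_inv_def fun_eq_iff)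

lemma LL_inv_mult: "LL_inv (LL_mult x y) = LL_mult (LL_inv y) (LL_inv x)"
  by (cases x; cases y) (simp add: LL_mult_def LL_inv_def fun_eq_iff algebra_simps)

lemma LL_one_in_carrier [simp]: "LL_one \<in> LL_carrier"
  by (simp add: LL_one_def LL_carrier_def)

lemma LL_mult_in_carrier:
  assumes "x \<in> LL_carrier" "y \<in> LL_carrier"
  shows "LL_mult x y \<in> LL_carrier"
proof -
  obtain f n g m where xy: "x = (f, n)" "y = (g, m)" by fastforce
  have "{k. f k + g (k - n) \<noteq> 0} \<subseteq> {k. f k \<noteq> 0} \<union> (\<lambda>k. k + n) ` {k. g k \<noteq> 0}"
    by (auto intro!: image_eqI[where x="_ - n"])
  moreover have "finite ({k. f k \<noteq> 0} \<union> (\<lambda>k. k + n) ` {k. g k \<noteq> 0})"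
    using assms xy by (simp add: LL_carrier_def)
  ultimately show ?thesis
    by (simp add: xy LL_mult_def LL_carrier_def finite_subset)
qed

lemma LL_inv_in_carrier:
  assumes "x \<in> LL_carrier"
  shows "LL_inv x \<in> LL_carrier"
proof -
  obtain f n where x: "x = (f, n)" by fastforce
  have "{k. - f (k + n) \<noteq> 0} = (\<lambda>k. k - n) ` {k. f k \<noteq> 0}"
    by (auto intro!: image_eqI[where x="_ + n"])
  then show ?thesis using assms by (simp add: x LL_inv_def LL_carrier_def)
qed

lemma LL_gens_in_carrier: "s \<in> LL_gens \<Longrightarrow> s \<in> LL_carrier"
  by (auto simp: LL_gens_def LL_carrier_def delta0_def)

lemma LL_inv_in_gens: "s \<in> LL_gens \<Longrightarrow> LL_inv s \<in> LL_gens"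
  by (auto simp: LL_gens_def LL_inv_def delta0_def fun_eq_iff)

lemma foldl_LL_mult: "foldl LL_mult (LL_mult x y) ws = LL_mult x (foldl LL_mult y ws)"
  by (induction ws arbitrary: y) (auto simp: LL_mult_assoc)

lemma foldl_LL_mult_in_carrier:
  "x \<in> LL_carrier \<Longrightarrow> set ws \<subseteq> LL_gens \<Longrightarrow> foldl LL_mult x ws \<in> LL_carrier"
  by (induction ws arbitrary: x) (auto simp: LL_mult_in_carrier LL_gens_in_carrier)

lemma bij_betw_LL_mult_left: "a \<in> LL_carrier \<Longrightarrow> bij_betw (LL_mult a) LL_carrier LL_carrier"
  by (rule bij_betw_byWitness[where f'="LL_mult (LL_inv a)"])
    (auto simp: LL_mult_in_carrier LL_inv_in_carrier)

lemma infsum_LL_mult_left: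
  "a \<in> LL_carrier \<Longrightarrow> infsum (\<lambda>z. g (LL_mult a z)) LL_carrier = infsum g LL_carrier"
  using infsum_reindex_bij_betw[OF bij_betw_LL_mult_left] .

lemma lp_space_LL_mult_left:
  "a \<in> LL_carrier \<Longrightarrow> g \<in> lp_space p LL_carrier \<Longrightarrow> (\<lambda>z. g (LL_mult a z)) \<in> lp_space p LL_carrier"
  using summable_on_reindex_bij_betw[OF bij_betw_LL_mult_left, of a "\<lambda>z. \<bar>g z\<bar> powr p"]
  by (simp add: lp_space_def)

definition LL_word_le :: "LL \<Rightarrow> nat \<Rightarrow> bool" where
  "LL_word_le z k \<longleftrightarrow> (\<exists>ws. set ws \<subseteq> LL_gens \<and> length ws \<le> k \<and> foldl LL_mult LL_one ws = z)"

lemma LL_word_le_one: "LL_word_le LL_one 0"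
  unfolding LL_word_le_def by (auto intro!: exI[of _ "[]"])

lemma LL_word_le_mono: "LL_word_le z k \<Longrightarrow> k \<le> k' \<Longrightarrow> LL_word_le z k'"
  unfolding LL_word_le_def by force

lemma LL_word_le_foldl:
  assumes "LL_word_le z k" "set ws \<subseteq> LL_gens"
  shows "LL_word_le (foldl LL_mult z ws) (k + length ws)"
proof -
  obtain vs where "set vs \<subseteq> LL_gens" "length vs \<le> k" "foldl LL_mult LL_one vs = z"
    using assms(1) unfolding LL_word_le_def by blast
  then show ?thesis
    unfolding LL_word_le_def using assms(2) by (intro exI[of _ "vs @ ws"]) auto
qed

lemma LL_dist_le_of_word_le:
  assumes "LL_word_le (LL_mult (LL_inv x) y) k"
  shows "LL_dist x y \<le> k"
proof -
  obtain ws where ws: "set ws \<subseteq> LL_gens" "length ws \<le> k"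
    "foldl LL_mult LL_one ws = LL_mult (LL_inv x) y"
    using assms unfolding LL_word_le_def by blast
  then have "foldl LL_mult x ws = y"
    using foldl_LL_mult[of x LL_one ws] by simp
  then have "LL_dist x y \<le> length ws"
    unfolding LL_dist_def by (intro Least_le) (use ws in blast)
  then show ?thesis using ws by simp
qed

lemma foldl_LL_mult_replicate_lamp:
  "foldl LL_mult (f, n) (replicate m (\<lambda>x. e * delta0 x, 0)) = (\<lambda>x. f x + int m * e * delta0 (x - n), n)"
  by (induction m arbitrary: f) (auto simp: LL_mult_Pair algebra_simps)

lemma foldl_LL_mult_replicate_shift:
  "foldl LL_mult (f, n) (replicate m (\<lambda>_. 0, e)) = (f, n + int m * e)"
  by (induction m arbitrary: n) (auto simp: LL_mult_Pair algebra_simps)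

lemma LL_word_le_add_lamp:
  assumes "LL_word_le (f, n) k"
  shows "LL_word_le (\<lambda>x. f x + c * delta0 (x - n), n) (k + nat \<bar>c\<bar>)"
proof -
  have "set (replicate (nat \<bar>c\<bar>) (\<lambda>x. sgn c * delta0 x, 0)) \<subseteq> LL_gens"
    by (auto simp: LL_gens_def sgn_if fun_eq_iff)
  from LL_word_le_foldl[OF assms this] show ?thesis
    by (simp add: foldl_LL_mult_replicate_lamp mult.assoc abs_mult_sgn)
qed

lemma LL_word_le_move:
  assumes "LL_word_le (f, n) k"
  shows "LL_word_le (f, n') (k + nat \<bar>n' - n\<bar>)"
proof -
  have "set (replicate (nat \<bar>n' - n\<bar>) (\<lambda>_. 0, sgn (n' - n))) \<subseteq> LL_gens"
    by (auto simp: LL_gens_def sgn_if)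
  from LL_word_le_foldl[OF assms this] show ?thesis
    by (simp add: foldl_LL_mult_replicate_shift abs_mult_sgn)
qed

lemma LL_word_le_sweep:
  fixes K M :: nat
  assumes "\<And>k. \<bar>f k\<bar> \<le> int M"
  shows "LL_word_le (\<lambda>k. if - int K \<le> k \<and> k < - int K + int i then f k else 0, - int K + int i)
           (K + i * (M + 1))"
proof (induction i)
  case 0
  have "LL_word_le (\<lambda>_. 0, 0) 0" using LL_word_le_one by (simp add: LL_one_def)
  from LL_word_le_move[OF this, of "- int K"] have "LL_word_le (\<lambda>_. 0, - int K) K" by simp
  moreover have "(\<lambda>k. if - int K \<le> k \<and> k < - int K + int 0 then f k else 0) = (\<lambda>_. 0)"
    by (simp add: fun_eq_iff)
  ultimately show ?case by simp
next
  case (Suc i)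
  let ?j = "- int K + int i"
  have "(\<lambda>k. (if - int K \<le> k \<and> k < ?j then f k else 0) + f ?j * delta0 (k - ?j))
      = (\<lambda>k. if - int K \<le> k \<and> k < ?j + 1 then f k else 0)"
    by (auto simp: fun_eq_iff delta0_def)
  from LL_word_le_add_lamp[OF Suc.IH, of "f ?j", unfolded this]
  have "LL_word_le (\<lambda>k. if - int K \<le> k \<and> k < ?j + 1 then f k else 0, ?j)
          (K + i * (M + 1) + nat \<bar>f ?j\<bar>)" .
  from LL_word_le_move[OF this, of "?j + 1"]
  have written: "LL_word_le (\<lambda>k. if - int K \<le> k \<and> k < ?j + 1 then f k else 0, ?j + 1)
          (K + i * (M + 1) + nat \<bar>f ?j\<bar> + 1)" by simp
  have cost: "K + i * (M + 1) + nat \<bar>f ?j\<bar> + 1 \<le> K + Suc i * (M + 1)"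
    using assms[of ?j] by simp
  have "- int K + int (Suc i) = ?j + 1" by simp
  then show ?case by (simp only:) (rule LL_word_le_mono[OF written cost])
qed

lemma LL_word_le_bounded:
  fixes K M :: nat
  assumes "\<And>k. \<bar>f k\<bar> \<le> int M" "\<And>k. \<bar>k\<bar> > int K \<Longrightarrow> f k = 0" "\<bar>n\<bar> \<le> int K"
  shows "LL_word_le (f, n) (3 * K + 1 + (2 * K + 1) * (M + 1))"
proof -
  have "(\<lambda>k. if - int K \<le> k \<and> k < int K + 1 then f k else 0) = f"
    using assms(2) by (auto simp: fun_eq_iff)
  then have "LL_word_le (f, int K + 1) (K + (2 * K + 1) * (M + 1))"
    using LL_word_le_sweep[where f=f and M=M and K=K and i="2 * K + 1", OF assms(1)] by simp
  from LL_word_le_move[OF this, of n] show ?thesis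
    by (rule LL_word_le_mono) (use assms(3) in simp)
qed

lemma LL_carrier_bounded:
  assumes "(f, n) \<in> LL_carrier"
  obtains K M :: nat where "\<And>k. \<bar>f k\<bar> \<le> int M" "\<And>k. \<bar>k\<bar> > int K \<Longrightarrow> f k = 0" "\<bar>n\<bar> \<le> int K"
proof
  let ?A = "{k. f k \<noteq> 0}"
  have fin: "finite ?A" using assms by (simp add: LL_carrier_def)
  show "\<bar>f k\<bar> \<le> int (nat (Max (insert 0 (abs ` f ` ?A))))" for k
    using fin by (cases "f k = 0") (auto intro: Max_ge)
  show "f k = 0" if "\<bar>k\<bar> > int (nat (max \<bar>n\<bar> (Max (insert 0 (abs ` ?A)))))" for k
  proof (rule ccontr)
    assume "f k \<noteq> 0"
    then have "\<bar>k\<bar> \<le> Max (insert 0 (abs ` ?A))" using fin by (intro Max_ge) auto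
    then show False using that by linarith
  qed
  show "\<bar>n\<bar> \<le> int (nat (max \<bar>n\<bar> (Max (insert 0 (abs ` ?A)))))"
    by linarith
qed

lemma LL_dist_attained:
  assumes "x \<in> LL_carrier" "y \<in> LL_carrier"
  obtains ws where "length ws = LL_dist x y" "set ws \<subseteq> LL_gens" "foldl LL_mult x ws = y"
proof -
  obtain f n where z: "LL_mult (LL_inv x) y = (f, n)" by fastforce
  have "(f, n) \<in> LL_carrier"
    using assms z[symmetric] by (simp add: LL_mult_in_carrier LL_inv_in_carrier)
  then obtain K M where "LL_word_le (f, n) (3 * K + 1 + (2 * K + 1) * (M + 1))"
    using LL_carrier_bounded LL_word_le_bounded by metis
  then obtain ws where ws: "set ws \<subseteq> LL_gens" "foldl LL_mult LL_one ws = LL_mult (LL_inv x) y"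
    unfolding LL_word_le_def z by blast
  have "foldl LL_mult x ws = y"
    using foldl_LL_mult[of x LL_one ws] ws by simp
  then have "\<exists>k ws. length ws = k \<and> set ws \<subseteq> LL_gens \<and> foldl LL_mult x ws = y"
    using ws by blast
  from LeastI_ex[OF this] show ?thesis
    using that unfolding LL_dist_def by blast
qed

section \<open>The bump functions\<close>

definition tent :: "nat \<Rightarrow> int \<Rightarrow> real" where
  "tent a v = real_of_int (max 0 (2 * int a - \<bar>v\<bar>))"

definition lamp_window :: "nat \<Rightarrow> int \<Rightarrow> int set" where
  "lamp_window a n = {n - 2 * int a .. n + 2 * int a}"

definition lamp_weight :: "nat \<Rightarrow> (int \<Rightarrow> int) \<Rightarrow> int \<Rightarrow> real" where
  "lamp_weight a f n =
     (if \<forall>k. k \<notin> lamp_window a n \<longrightarrow> f k = 0 then \<Prod>k\<in>lamp_window a n. tent a (f k) else 0)"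

definition bump :: "nat \<Rightarrow> LL \<Rightarrow> real" where
  "bump a z = tent a (snd z) * lamp_weight a (fst z) (snd z)"

lemma tent_nonneg [simp]: "0 \<le> tent a v"
  by (simp add: tent_def)

lemma lamp_weight_nonneg [simp]: "0 \<le> lamp_weight a f n"
  by (simp add: lamp_weight_def prod_nonneg)

lemma bump_nonneg [simp]: "0 \<le> bump a z"
  by (simp add: bump_def)

text \<open>A step changes the tent by at most 1, while the tent is at least \<open>a\<close> on
  \<open>a + 1\<close> of the translates \<open>v + j\<close>, \<open>\<bar>j\<bar> \<le> 2a\<close>.\<close>
lemma tent_diff_powr_le:
  fixes p A :: real
  assumes a: "a \<ge> 1" and p: "p \<ge> 1" and c: "\<bar>c\<bar> \<le> 1" and A: "A \<ge> 0"
  shows "\<bar>A * tent a v - A * tent a (v + c)\<bar> powr p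
           \<le> (\<Sum>j\<in>{- 2 * int a .. 2 * int a}. (A * tent a (v + j)) powr p) / real a powr (p + 1)"
proof -
  have tent_step: "\<bar>tent a v - tent a (v + c)\<bar> powr p
                     \<le> (\<Sum>j\<in>{- 2 * int a .. 2 * int a}. tent a (v + j) powr p) / real a powr (p + 1)"
  proof (cases "\<bar>v\<bar> > 2 * int a")
    case True
    then have "tent a v = 0" "tent a (v + c) = 0" using c by (auto simp: tent_def)
    then show ?thesis by (simp add: sum_nonneg)
  next
    case False
    define J where "J = (if v \<ge> 0 then {- v .. - v + int a} else {- v - int a .. - v})"
    have "real a powr (p + 1) \<le> real (card J) * real a powr p"
      using a by (simp add: J_def powr_add)
    also have "\<dots> = (\<Sum>j\<in>J. real a powr p)" by simp
    also have "\<dots> \<le> (\<Sum>j\<in>J. tent a (v + j) powr p)"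
      using p by (intro sum_mono powr_mono2) (auto simp: J_def tent_def split: if_splits)
    also have "\<dots> \<le> (\<Sum>j\<in>{- 2 * int a .. 2 * int a}. tent a (v + j) powr p)"
      using False by (intro sum_mono2) (auto simp: J_def)
    finally have "1 \<le> (\<Sum>j\<in>{- 2 * int a .. 2 * int a}. tent a (v + j) powr p) / real a powr (p + 1)"
      using a by simp
    moreover have "\<bar>tent a v - tent a (v + c)\<bar> powr p \<le> 1"
      using c p by (intro powr_le1) (auto simp: tent_def)
    ultimately show ?thesis by linarith
  qed
  have "\<bar>A * tent a v - A * tent a (v + c)\<bar> powr p = A powr p * \<bar>tent a v - tent a (v + c)\<bar> powr p"
    using A by (simp add: powr_mult abs_mult flip: right_diff_distrib)
  also have "\<dots> \<le> A powr p * ((\<Sum>j\<in>{- 2 * int a .. 2 * int a}. tent a (v + j) powr p) / real a powr (p + 1))"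
    using tent_step by (rule mult_left_mono) simp
  also have "\<dots> = (\<Sum>j\<in>{- 2 * int a .. 2 * int a}. (A * tent a (v + j)) powr p) / real a powr (p + 1)"
    using A by (simp add: powr_mult sum_distrib_left)
  finally show ?thesis .
qed

definition LL_lamp :: "int \<Rightarrow> LL" where
  "LL_lamp j = (\<lambda>k. j * delta0 k, 0)"

definition LL_shift :: "int \<Rightarrow> LL" where
  "LL_shift j = (\<lambda>_. 0, j)"

lemma LL_lamp_in_carrier: "LL_lamp j \<in> LL_carrier"
proof -
  have "{k. j * delta0 k \<noteq> 0} \<subseteq> {0}" by (auto simp: delta0_def)
  then show ?thesis by (auto simp: LL_lamp_def LL_carrier_def intro: finite_subset)
qed

lemma LL_shift_in_carrier: "LL_shift j \<in> LL_carrier"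
  by (simp add: LL_shift_def LL_carrier_def)

lemma LL_lamp_mult: "LL_mult (LL_lamp j) (f, n) = (\<lambda>k. f k + j * delta0 k, n)"
  by (simp add: LL_lamp_def LL_mult_Pair fun_eq_iff)

lemma LL_gens_eq: "LL_gens = {LL_lamp 1, LL_lamp (-1), LL_shift 1, LL_shift (-1)}"
  by (auto simp: LL_gens_def LL_lamp_def LL_shift_def fun_eq_iff)

lemma LL_one_neq_LL_lamp: "LL_one \<noteq> LL_lamp 1"
  by (auto simp: LL_one_def LL_lamp_def fun_eq_iff delta0_def)

lemma bump_LL_lamp_mult:
  assumes "tent a n \<noteq> 0"
  obtains A where "A \<ge> 0" "\<And>j. bump a (LL_mult (LL_lamp j) (f, n)) = A * tent a (f 0 + j)"
proof
  have "\<bar>n\<bar> < 2 * int a" using assms by (auto simp: tent_def)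
  then have W0: "0 \<in> lamp_window a n" by (auto simp: lamp_window_def)
  define Q where "Q = (if \<forall>k. k \<notin> lamp_window a n \<longrightarrow> f k = 0
                        then \<Prod>k\<in>lamp_window a n - {0}. tent a (f k) else 0)"
  show "tent a n * Q \<ge> 0" by (simp add: Q_def prod_nonneg)
  have "lamp_weight a (\<lambda>k. f k + j * delta0 k) n = tent a (f 0 + j) * Q" for j
  proof -
    have "k \<notin> lamp_window a n \<Longrightarrow> delta0 k = 0" for k
      using W0 by (auto simp: delta0_def)
    then have "(\<forall>k. k \<notin> lamp_window a n \<longrightarrow> f k + j * delta0 k = 0) \<longleftrightarrow>
          (\<forall>k. k \<notin> lamp_window a n \<longrightarrow> f k = 0)"
      by auto
    moreover have "(\<Prod>k\<in>lamp_window a n - {0}. tent a (f k + j * delta0 k))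
                     = (\<Prod>k\<in>lamp_window a n - {0}. tent a (f k))"
      by (intro prod.cong) (auto simp: delta0_def)
    then have "(\<Prod>k\<in>lamp_window a n. tent a (f k + j * delta0 k))
                 = tent a (f 0 + j) * (\<Prod>k\<in>lamp_window a n - {0}. tent a (f k))"
      using W0 by (simp add: prod.remove[of _ 0] lamp_window_def delta0_def)
    ultimately show ?thesis unfolding lamp_weight_def Q_def by auto
  qed
  then show "bump a (LL_mult (LL_lamp j) (f, n)) = tent a n * Q * tent a (f 0 + j)" for j
    by (simp add: LL_lamp_mult bump_def)
qed

lemma lamp_weight_shift: "lamp_weight a (\<lambda>k. f (k - j)) (j + n) = lamp_weight a f n"
proof -
  have W: "lamp_window a (j + n) = (\<lambda>k. k + j) ` lamp_window a n"
    by (simp add: lamp_window_def algebra_simps)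
  have cond: "(\<forall>k. k \<notin> lamp_window a (j + n) \<longrightarrow> f (k - j) = 0) \<longleftrightarrow>
        (\<forall>k. k \<notin> lamp_window a n \<longrightarrow> f k = 0)"
    unfolding W by (metis (no_types, lifting) add_diff_cancel_right' diff_add_cancel image_iff)
  have prod: "(\<Prod>k\<in>lamp_window a (j + n). tent a (f (k - j))) = (\<Prod>k\<in>lamp_window a n. tent a (f k))"
    unfolding W by (subst prod.reindex) (auto simp: inj_on_def)
  show ?thesis by (simp only: lamp_weight_def cond prod)
qed

lemma bump_LL_shift_mult: "bump a (LL_mult (LL_shift j) (f, n)) = lamp_weight a f n * tent a (n + j)"
  by (simp add: LL_shift_def LL_mult_Pair bump_def lamp_weight_shift add.commute)

lemma bump_diff_LL_lamp_powr_le: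
  fixes p :: real
  assumes a: "a \<ge> 1" and p: "p \<ge> 1" and c: "\<bar>c\<bar> \<le> 1"
  shows "\<bar>bump a z - bump a (LL_mult (LL_lamp c) z)\<bar> powr p
           \<le> (\<Sum>j\<in>{- 2 * int a .. 2 * int a}. bump a (LL_mult (LL_lamp j) z) powr p) / real a powr (p + 1)"
proof -
  obtain f n where z: "z = (f, n)" by fastforce
  show ?thesis
  proof (cases "tent a n = 0")
    case True
    then show ?thesis by (simp add: z LL_lamp_mult bump_def)
  next
    case False
    then obtain A where "A \<ge> 0" and A: "\<And>j. bump a (LL_mult (LL_lamp j) (f, n)) = A * tent a (f 0 + j)"
      using bump_LL_lamp_mult by blast
    moreover have "bump a (f, n) = A * tent a (f 0)"
      using A[of 0] by (simp add: LL_lamp_mult delta0_def)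
    ultimately show ?thesis unfolding z by (simp only: tent_diff_powr_le[OF a p c])
  qed
qed

lemma bump_diff_LL_shift_powr_le:
  fixes p :: real
  assumes a: "a \<ge> 1" and p: "p \<ge> 1" and c: "\<bar>c\<bar> \<le> 1"
  shows "\<bar>bump a z - bump a (LL_mult (LL_shift c) z)\<bar> powr p
           \<le> (\<Sum>j\<in>{- 2 * int a .. 2 * int a}. bump a (LL_mult (LL_shift j) z) powr p) / real a powr (p + 1)"
proof -
  obtain f n where z: "z = (f, n)" by fastforce
  have "bump a z = lamp_weight a f n * tent a n" by (simp add: z bump_def)
  then show ?thesis
    using tent_diff_powr_le[OF a p c lamp_weight_nonneg] by (simp add: z bump_LL_shift_mult)
qed

lemma bump_diff_gen_powr_le:
  fixes p :: real
  assumes a: "a \<ge> 1" and p: "p \<ge> 1" and s: "s \<in> LL_gens"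
  obtains t where "\<And>j. t j \<in> LL_carrier"
    "\<And>z. \<bar>bump a z - bump a (LL_mult s z)\<bar> powr p
           \<le> (\<Sum>j\<in>{- 2 * int a .. 2 * int a}. bump a (LL_mult (t j) z) powr p) / real a powr (p + 1)"
proof -
  consider (lamp) c where "s = LL_lamp c" "\<bar>c\<bar> \<le> 1" | (shift) c where "s = LL_shift c" "\<bar>c\<bar> \<le> 1"
    using s unfolding LL_gens_eq by force
  then show ?thesis
  proof cases
    case lamp
    have "\<bar>bump a z - bump a (LL_mult s z)\<bar> powr p
            \<le> (\<Sum>j\<in>{- 2 * int a .. 2 * int a}. bump a (LL_mult (LL_lamp j) z) powr p) / real a powr (p + 1)"
      for z unfolding lamp(1) by (rule bump_diff_LL_lamp_powr_le[OF a p lamp(2)])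
    with LL_lamp_in_carrier show ?thesis by (rule that)
  next
    case shift
    have "\<bar>bump a z - bump a (LL_mult s z)\<bar> powr p
            \<le> (\<Sum>j\<in>{- 2 * int a .. 2 * int a}. bump a (LL_mult (LL_shift j) z) powr p) / real a powr (p + 1)"
      for z unfolding shift(1) by (rule bump_diff_LL_shift_powr_le[OF a p shift(2)])
    with LL_shift_in_carrier show ?thesis by (rule that)
  qed
qed

lemma bump_nonzero_bounds:
  assumes "bump a (f, n) \<noteq> 0"
  shows "\<bar>n\<bar> < 2 * int a" "\<bar>f k\<bar> < 2 * int a" "\<bar>k\<bar> > 4 * int a \<Longrightarrow> f k = 0"
proof -
  have tent: "tent a n \<noteq> 0" and weight: "lamp_weight a f n \<noteq> 0"
    using assms by (auto simp: bump_def)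
  show n: "\<bar>n\<bar> < 2 * int a" using tent by (auto simp: tent_def)
  have outside: "\<forall>k. k \<notin> lamp_window a n \<longrightarrow> f k = 0"
    and "(\<Prod>k\<in>lamp_window a n. tent a (f k)) \<noteq> 0"
    using weight by (auto simp: lamp_weight_def split: if_splits)
  then have "k \<in> lamp_window a n \<Longrightarrow> tent a (f k) \<noteq> 0"
    by (auto simp: lamp_window_def)
  then show "\<bar>f k\<bar> < 2 * int a"
    using outside n by (cases "k \<in> lamp_window a n") (auto simp: tent_def)
  show "f k = 0" if "\<bar>k\<bar> > 4 * int a"
  proof -
    have "k \<notin> lamp_window a n" using that n by (auto simp: lamp_window_def)
    then show ?thesis using outside by blast
  qed
qed

lemma finite_bump_support: "finite {z. bump a z \<noteq> 0}"
proof (rule finite_subset)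
  let ?I = "{- 4 * int a .. 4 * int a}" and ?V = "{- 2 * int a .. 2 * int a}"
  show "{z. bump a z \<noteq> 0} \<subseteq> {f. \<forall>k. (k \<in> ?I \<longrightarrow> f k \<in> ?V) \<and> (k \<notin> ?I \<longrightarrow> f k = 0)} \<times> ?V"
  proof
    fix z assume "z \<in> {z. bump a z \<noteq> 0}"
    moreover obtain f n where z: "z = (f, n)" by fastforce
    ultimately have "bump a (f, n) \<noteq> 0" by simp
    note bounds = bump_nonzero_bounds[OF this]
    have "f k \<in> ?V" for k using bounds(2)[of k] by (simp add: abs_less_iff)
    moreover have "f k = 0" if "k \<notin> ?I" for k using that bounds(3)[of k] by auto
    moreover have "n \<in> ?V" using bounds(1) by (simp add: abs_less_iff)
    ultimately show "z \<in> {f. \<forall>k. (k \<in> ?I \<longrightarrow> f k \<in> ?V) \<and> (k \<notin> ?I \<longrightarrow> f k = 0)} \<times> ?V"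
      unfolding z by blast
  qed
  show "finite ({f. \<forall>k. (k \<in> ?I \<longrightarrow> f k \<in> ?V) \<and> (k \<notin> ?I \<longrightarrow> f k = 0)} \<times> ?V)"
    by (intro finite_cartesian_product finite_set_of_finite_funs) auto
qed

lemma bump_in_lp_space: "bump a \<in> lp_space p LL_carrier"
proof -
  have "finite {z. \<bar>bump a z\<bar> powr p \<noteq> 0}"
    using finite_bump_support by (rule finite_subset[rotated]) auto
  then show ?thesis
    unfolding lp_space_def by (simp add: summable_on_finite_support)
qed

lemma bump_one_pos: "a \<ge> 1 \<Longrightarrow> bump a LL_one > 0"
  by (simp add: bump_def LL_one_def lamp_weight_def tent_def prod_pos)

lemma LL_word_le_of_bump_nonzero:
  assumes a: "a \<ge> 1" and "bump a z \<noteq> 0"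
  shows "LL_word_le z (40 * a\<^sup>2)"
proof -
  obtain f n where z: "z = (f, n)" by fastforce
  note bounds = bump_nonzero_bounds[OF assms(2)[unfolded z]]
  have word: "LL_word_le (f, n) (3 * (4 * a) + 1 + (2 * (4 * a) + 1) * (2 * a + 1))"
  proof (rule LL_word_le_bounded)
    show "\<bar>f k\<bar> \<le> int (2 * a)" for k using bounds(2)[of k] by simp
    show "f k = 0" if "\<bar>k\<bar> > int (4 * a)" for k using bounds(3) that by simp
    show "\<bar>n\<bar> \<le> int (4 * a)" using bounds(1) by simp
  qed
  have "3 * (4 * a) + 1 + (2 * (4 * a) + 1) * (2 * a + 1) = 16 * (a * a) + 22 * a + 2"
    by (simp add: algebra_simps)
  also have "\<dots> \<le> 40 * a\<^sup>2"
    using a le_square[of a] unfolding power2_eq_square by linarith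
  finally show ?thesis unfolding z by (rule LL_word_le_mono[OF word])
qed

section \<open>The profile bound\<close>

lemma infsum_le_translates:
  fixes G H :: "LL \<Rightarrow> real"
  assumes J: "finite J" and t: "\<And>j. j \<in> J \<Longrightarrow> t j \<in> LL_carrier"
    and H: "H summable_on LL_carrier" and G: "G summable_on LL_carrier"
    and HG: "\<And>z. H z \<le> (\<Sum>j\<in>J. G (LL_mult (t j) z)) / c"
  shows "infsum H LL_carrier \<le> real (card J) / c * infsum G LL_carrier"
proof -
  have G_t: "((\<lambda>z. G (LL_mult (t j) z) / c) has_sum (infsum G LL_carrier / c)) LL_carrier"
    if "j \<in> J" for j
  proof (rule has_sum_divide_const)
    have "(\<lambda>z. G (LL_mult (t j) z)) summable_on LL_carrier"
      using summable_on_reindex_bij_betw[OF bij_betw_LL_mult_left[OF t[OF that]], of G] G by simp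
    then show "((\<lambda>z. G (LL_mult (t j) z)) has_sum infsum G LL_carrier) LL_carrier"
      using infsum_LL_mult_left[OF t[OF that], of G] by (metis has_sum_infsum)
  qed
  have "infsum H LL_carrier \<le> infsum (\<lambda>z. \<Sum>j\<in>J. G (LL_mult (t j) z) / c) LL_carrier"
    using HG G_t
    by (intro infsum_mono H summable_on_finite_sum[OF J])
      (auto simp: sum_divide_distrib intro: has_sum_imp_summable)
  also have "\<dots> = (\<Sum>j\<in>J. infsum G LL_carrier / c)"
    using G_t by (simp add: infsum_finite_sum[OF J] has_sum_iff)
  finally show ?thesis by simp
qed

lemma infsum_bump_diff_le:
  fixes p :: real
  assumes a: "a \<ge> 1" and p: "p \<ge> 1" and s: "s \<in> LL_gens"
  shows "infsum (\<lambda>z. \<bar>bump a z - bump a (LL_mult s z)\<bar> powr p) LL_carrier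
           \<le> (5 / real a) powr p * infsum (\<lambda>z. bump a z powr p) LL_carrier"
proof -
  obtain t where t: "\<And>j. t j \<in> LL_carrier"
    and pointwise: "\<And>z. \<bar>bump a z - bump a (LL_mult s z)\<bar> powr p
           \<le> (\<Sum>j\<in>{- 2 * int a .. 2 * int a}. bump a (LL_mult (t j) z) powr p) / real a powr (p + 1)"
    using bump_diff_gen_powr_le[OF a p s] by blast
  have bump_summable: "(\<lambda>z. bump a z powr p) summable_on LL_carrier"
    using bump_in_lp_space[of a p] by (simp add: lp_space_def)
  have diff_summable: "(\<lambda>z. \<bar>bump a z - bump a (LL_mult s z)\<bar> powr p) summable_on LL_carrier"
    using lp_space_diff[OF p bump_in_lp_space lp_space_LL_mult_left[OF LL_gens_in_carrier[OF s] bump_in_lp_space]]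
    by (simp add: lp_space_def)
  have "infsum (\<lambda>z. \<bar>bump a z - bump a (LL_mult s z)\<bar> powr p) LL_carrier
          \<le> real (card {- 2 * int a .. 2 * int a}) / real a powr (p + 1) * infsum (\<lambda>z. bump a z powr p) LL_carrier"
    by (intro infsum_le_translates[OF _ _ diff_summable bump_summable pointwise] t) auto
  also have "\<dots> = real (4 * a + 1) / real a powr (p + 1) * infsum (\<lambda>z. bump a z powr p) LL_carrier"
    by simp
  also have "\<dots> \<le> (5 / real a) powr p * infsum (\<lambda>z. bump a z powr p) LL_carrier"
  proof (rule mult_right_mono)
    have "real (4 * a + 1) / real a powr (p + 1) \<le> 5 * real a / (real a * real a powr p)"
      using a by (intro frac_le) (auto simp: powr_add)
    also have "\<dots> = 5 / real a powr p" using a by simp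
    also have "\<dots> \<le> 5 powr p / real a powr p"
      using p powr_mono[of 1 p 5] by (intro divide_right_mono) auto
    finally show "real (4 * a + 1) / real a powr (p + 1) \<le> (5 / real a) powr p"
      by (simp add: powr_divide)
  qed (simp add: infsum_nonneg)
  finally show ?thesis .
qed

definition bump_field :: "nat \<Rightarrow> real \<Rightarrow> LL \<Rightarrow> LL \<Rightarrow> real" where
  "bump_field a p x y = bump a (LL_mult (LL_inv x) y) / lp_norm p LL_carrier (bump a)"

lemma lp_norm_bump_powr:
  assumes "p > 0"
  shows "lp_norm p LL_carrier (bump a) powr p = infsum (\<lambda>z. bump a z powr p) LL_carrier"
  using assms by (simp add: lp_norm_def powr_powr infsum_nonneg)

lemma infsum_bump_powr_pos:
  assumes "a \<ge> 1" "p > 0"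
  shows "infsum (\<lambda>z. bump a z powr p) LL_carrier > 0"
proof -
  have "infsum (\<lambda>z. bump a z powr p) {LL_one} \<le> infsum (\<lambda>z. bump a z powr p) LL_carrier"
    using bump_in_lp_space[of a p] by (intro infsum_mono_neutral) (auto simp: lp_space_def)
  moreover have "infsum (\<lambda>z. bump a z powr p) {LL_one} > 0"
    using bump_one_pos[OF assms(1)] by simp
  ultimately show ?thesis by linarith
qed

lemma bump_field_powr:
  assumes "a \<ge> 1" "p > 0"
  shows "\<bar>bump_field a p x y\<bar> powr p
           = bump a (LL_mult (LL_inv x) y) powr p / infsum (\<lambda>z. bump a z powr p) LL_carrier"
  using assms by (simp add: bump_field_def abs_divide powr_divide lp_norm_bump_powr)

lemma bump_field_in_lp_sphere:
  assumes a: "a \<ge> 1" and p: "p > 0" and x: "x \<in> LL_carrier"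
  shows "bump_field a p x \<in> lp_sphere p LL_carrier"
proof -
  let ?M = "infsum (\<lambda>z. bump a z powr p) LL_carrier"
  have "(\<lambda>y. bump a (LL_mult (LL_inv x) y)) \<in> lp_space p LL_carrier"
    by (intro lp_space_LL_mult_left LL_inv_in_carrier x bump_in_lp_space)
  then have summable: "(\<lambda>y. \<bar>bump_field a p x y\<bar> powr p) summable_on LL_carrier"
    by (simp add: bump_field_powr[OF a p] lp_space_def divide_inverse summable_on_cmult_left)
  have "infsum (\<lambda>y. \<bar>bump_field a p x y\<bar> powr p) LL_carrier
          = infsum (\<lambda>y. bump a (LL_mult (LL_inv x) y) powr p) LL_carrier / ?M"
    by (simp add: bump_field_powr[OF a p] divide_inverse infsum_cmult_left')
  also have "\<dots> = 1"
    using infsum_bump_powr_pos[OF a p]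
      infsum_LL_mult_left[OF LL_inv_in_carrier[OF x], of "\<lambda>z. bump a z powr p"]
    by simp
  finally show ?thesis
    using summable by (simp add: lp_sphere_def lp_space_def lp_norm_def)
qed

lemma bump_field_step_le:
  assumes a: "a \<ge> 1" and p: "p \<ge> 1" and w: "w \<in> LL_carrier" and s: "s \<in> LL_gens"
  shows "infsum (\<lambda>y. \<bar>bump_field a p w y - bump_field a p (LL_mult w s) y\<bar> powr p) LL_carrier
           \<le> (5 / real a) powr p"
proof -
  let ?M = "infsum (\<lambda>z. bump a z powr p) LL_carrier"
  let ?G = "\<lambda>z. \<bar>bump a z - bump a (LL_mult (LL_inv s) z)\<bar> powr p"
  have M: "?M > 0" using infsum_bump_powr_pos[OF a] p by simp
  have N: "lp_norm p LL_carrier (bump a) powr p = ?M" using lp_norm_bump_powr p by simp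
  have "\<bar>bump_field a p w y - bump_field a p (LL_mult w s) y\<bar> powr p = ?G (LL_mult (LL_inv w) y) / ?M"
    for y
    using N by (simp add: bump_field_def LL_inv_mult LL_mult_assoc powr_divide flip: diff_divide_distrib)
  then have "infsum (\<lambda>y. \<bar>bump_field a p w y - bump_field a p (LL_mult w s) y\<bar> powr p) LL_carrier
               = infsum ?G LL_carrier / ?M"
    using infsum_LL_mult_left[OF LL_inv_in_carrier[OF w], of "\<lambda>z. ?G z / ?M"]
    by (simp add: divide_inverse infsum_cmult_left')
  also have "\<dots> \<le> (5 / real a) powr p * ?M / ?M"
    using infsum_bump_diff_le[OF a p LL_inv_in_gens[OF s]] M by (intro divide_right_mono) auto
  finally show ?thesis using M by simp
qed

lemma lp_norm_bump_field_diff_le: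
  assumes a: "a \<ge> 1" and p: "p \<ge> 1" and x: "x \<in> LL_carrier" and y: "y \<in> LL_carrier"
  shows "lp_norm p LL_carrier (\<lambda>z. bump_field a p x z - bump_field a p y z) \<le> real (LL_dist x y) * (5 / real a)"
proof -
  obtain ws where ws: "length ws = LL_dist x y" "set ws \<subseteq> LL_gens" "foldl LL_mult x ws = y"
    using LL_dist_attained[OF x y] by blast
  define P where "P i = bump_field a p (foldl LL_mult x (take i ws))" for i
  have P_carrier: "foldl LL_mult x (take i ws) \<in> LL_carrier" for i
    using x ws(2) by (intro foldl_LL_mult_in_carrier) (auto dest: in_set_takeD)
  have "infsum (\<lambda>z. \<bar>P 0 z - P (length ws) z\<bar> powr p) LL_carrier \<le> real (length ws) powr p * (5 / real a) powr p"
  proof (rule infsum_powr_telescope_le[OF p])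
    show "P i \<in> lp_space p LL_carrier" for i
      using bump_field_in_lp_sphere[OF a _ P_carrier] p by (simp add: P_def lp_sphere_def)
    show "infsum (\<lambda>z. \<bar>P i z - P (Suc i) z\<bar> powr p) LL_carrier \<le> (5 / real a) powr p"
      if "i < length ws" for i
    proof -
      have "ws ! i \<in> LL_gens" using that ws(2) nth_mem by blast
      from bump_field_step_le[OF a p P_carrier this] show ?thesis
        using that by (simp add: P_def take_Suc_conv_app_nth)
    qed
  qed
  then have "lp_norm p LL_carrier (\<lambda>z. P 0 z - P (length ws) z) \<le> (real (length ws) powr p * (5 / real a) powr p) powr (1 / p)"
    using p by (intro lp_norm_le_of_infsum_le) auto
  also have "real (length ws) powr p * (5 / real a) powr p = (real (length ws) * (5 / real a)) powr p"
    by (rule powr_mult[symmetric])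
  also have "\<dots> powr (1 / p) = real (length ws) * (5 / real a)"
    using p by (simp add: powr_powr)
  finally have "lp_norm p LL_carrier (\<lambda>z. P 0 z - P (length ws) z) \<le> real (length ws) * (5 / real a)" .
  moreover have "P 0 = bump_field a p x" "P (length ws) = bump_field a p y"
    using ws(3) by (simp_all add: P_def)
  ultimately show ?thesis using ws(1) by simp
qed

lemma LL_dist_pos:
  assumes "x \<in> LL_carrier" "y \<in> LL_carrier" "x \<noteq> y"
  shows "LL_dist x y \<ge> 1"
proof -
  obtain ws where ws: "length ws = LL_dist x y" "foldl LL_mult x ws = y"
    using LL_dist_attained[OF assms(1,2)] by blast
  have "ws \<noteq> []"
  proof
    assume "ws = []"
    with ws(2) assms(3) show False by simp
  qed
  then have "length ws \<ge> 1" by (simp add: Suc_le_eq)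
  with ws(1) show ?thesis by simp
qed

lemma eps_xi_bump_field_le:
  assumes a: "a \<ge> 1" and p: "p \<ge> 1"
  shows "eps_xi p LL_carrier (\<lambda>x y. real (LL_dist x y)) (bump_field a p) \<le> 5 / real a"
  unfolding eps_xi_def
proof (rule cSUP_least)
  show "{(x, y). x \<in> LL_carrier \<and> y \<in> LL_carrier \<and> x \<noteq> y} \<noteq> {}"
    using LL_one_neq_LL_lamp LL_lamp_in_carrier LL_one_in_carrier by blast
  fix xy assume "xy \<in> {(x, y). x \<in> LL_carrier \<and> y \<in> LL_carrier \<and> x \<noteq> y}"
  then obtain x y where xy: "xy = (x, y)" and x: "x \<in> LL_carrier" and y: "y \<in> LL_carrier" and "x \<noteq> y"
    by auto
  then have "real (LL_dist x y) > 0" using LL_dist_pos[OF x y] by simp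
  then have "lp_norm p LL_carrier (\<lambda>z. bump_field a p x z - bump_field a p y z) / real (LL_dist x y)
               \<le> 5 / real a"
    using lp_norm_bump_field_diff_le[OF a p x y] by (simp add: pos_divide_le_eq mult.commute)
  then show "(\<lambda>(x, y). lp_norm p LL_carrier (\<lambda>z. bump_field a p x z - bump_field a p y z) / real (LL_dist x y)) xy
               \<le> 5 / real a"
    by (simp add: xy)
qed

lemma supp_radius_bump_field:
  assumes a: "a \<ge> 1"
  shows "supp_radius_le LL_carrier (\<lambda>x y. real (LL_dist x y)) (bump_field a p) (real (40 * a\<^sup>2))"
  unfolding supp_radius_le_def
proof (intro ballI impI)
  fix x y assume "bump_field a p x y \<noteq> 0"
  then have "bump a (LL_mult (LL_inv x) y) \<noteq> 0" by (auto simp: bump_field_def)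
  then have "LL_dist x y \<le> 40 * a\<^sup>2"
    by (intro LL_dist_le_of_word_le LL_word_le_of_bump_nonzero a)
  then show "real (LL_dist x y) \<le> real (40 * a\<^sup>2)"
    by (simp only: of_nat_le_iff)
qed

lemma profile_le_bump:
  assumes a: "a \<ge> 1" and p: "p \<ge> 1" and S: "real (40 * a\<^sup>2) \<le> S"
  shows "profile p LL_carrier (\<lambda>x y. real (LL_dist x y)) S \<le> 5 / real a"
  unfolding profile_def
proof (rule cInf_lower2)
  let ?E = "{eps_xi p LL_carrier (\<lambda>x y. real (LL_dist x y)) \<xi> | \<xi>.
               (\<forall>x\<in>LL_carrier. \<xi> x \<in> lp_sphere p LL_carrier)
               \<and> supp_radius_le LL_carrier (\<lambda>x y. real (LL_dist x y)) \<xi> S}"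
  have "supp_radius_le LL_carrier (\<lambda>x y. real (LL_dist x y)) (bump_field a p) S"
    using supp_radius_bump_field[OF a, of p] S unfolding supp_radius_le_def by (meson order_trans)
  moreover have "\<forall>x\<in>LL_carrier. bump_field a p x \<in> lp_sphere p LL_carrier"
    using bump_field_in_lp_sphere[OF a] p by simp
  ultimately show "eps_xi p LL_carrier (\<lambda>x y. real (LL_dist x y)) (bump_field a p) \<in> ?E"
    by blast
  show "eps_xi p LL_carrier (\<lambda>x y. real (LL_dist x y)) (bump_field a p) \<le> 5 / real a"
    by (rule eps_xi_bump_field_le[OF a p])
  show "bdd_below ?E"
    using eps_xi_nonneg[OF p _ LL_one_in_carrier LL_lamp_in_carrier LL_one_neq_LL_lamp]
    by (intro bdd_belowI[of _ 0]) blast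
qed

lemma profile_le_inverse_sqrt:
  fixes p S :: real
  assumes p: "p \<ge> 1" and S: "S \<ge> 160"
  shows "profile p LL_carrier (\<lambda>x y. real (LL_dist x y)) S \<le> 64 / sqrt S"
proof -
  define s where "s = sqrt (S / 40)"
  define a where "a = nat \<lfloor>s\<rfloor>"
  have s2: "s \<ge> 2" using S by (simp add: s_def real_le_rsqrt)
  have a_s: "real a \<le> s" "s - 1 \<le> real a" using s2 by (simp_all add: a_def)
  have a: "a \<ge> 1" using a_s s2 by linarith
  have "real (40 * a\<^sup>2) \<le> 40 * s\<^sup>2"
    using a_s a by (simp add: power_mono)
  also have "\<dots> = S" using S by (simp add: s_def)
  finally have "profile p LL_carrier (\<lambda>x y. real (LL_dist x y)) S \<le> 5 / real a"
    by (rule profile_le_bump[OF a p])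
  also have "\<dots> = 10 / (2 * real a)" by simp
  also have "\<dots> \<le> 10 / s"
    using a_s s2 by (intro divide_left_mono) auto
  also have "\<dots> = 10 * sqrt 40 / sqrt S"
    by (simp add: s_def real_sqrt_divide)
  also have "\<dots> \<le> 64 / sqrt S"
  proof -
    have "sqrt 40 \<le> (32 / 5 :: real)" by (rule real_le_lsqrt) (simp_all add: power2_eq_square)
    then show ?thesis using S by (intro divide_right_mono) auto
  qed
  finally show ?thesis .
qed

lemma inverse_sqrt_le_ln_div_cbrt:
  fixes S :: real
  assumes S: "S \<ge> 3"
  shows "1 / sqrt S \<le> ln S / S powr (1 / 3)"
proof -
  have "S powr (1 / 3) \<le> S powr (1 / 2)" using S by (intro powr_mono) auto
  also have "\<dots> = sqrt S" using S by (simp add: powr_half_sqrt)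
  finally have "1 / sqrt S \<le> 1 / S powr (1 / 3)"
    using S by (intro divide_left_mono) auto
  also have "\<dots> \<le> ln S / S powr (1 / 3)"
  proof (rule divide_right_mono)
    have "1 = ln (exp (1::real))" by simp
    also have "\<dots> \<le> ln S" using exp_le S by (subst ln_le_cancel_iff) auto
    finally show "1 \<le> ln S" .
  qed simp
  finally show ?thesis .
qed

theorem corollary4p2p7:
  fixes p :: real
  assumes "1 \<le> p"
  shows "preceq (profile p LL_carrier (\<lambda>x y. real (LL_dist x y))) (\<lambda>S. ln S / S powr (1/3))"
  unfolding preceq_def
proof (intro exI conjI)
  show "\<forall>\<^sub>F S in at_top. ln S / S powr (1 / 3) \<ge> 1 / 64 * profile p LL_carrier (\<lambda>x y. real (LL_dist x y)) (1 * S)"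
  proof (rule eventually_at_top_linorderI)
    fix S :: real assume "S \<ge> 160"
    then have "1 / 64 * profile p LL_carrier (\<lambda>x y. real (LL_dist x y)) S \<le> 1 / sqrt S"
      using profile_le_inverse_sqrt[OF assms] by simp
    also have "\<dots> \<le> ln S / S powr (1 / 3)"
      using \<open>S \<ge> 160\<close> by (intro inverse_sqrt_le_ln_div_cbrt) simp
    finally show "ln S / S powr (1 / 3) \<ge> 1 / 64 * profile p LL_carrier (\<lambda>x y. real (LL_dist x y)) (1 * S)"
      by simp
  qed
qed simp_all

end
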